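(* Let $k$ be a field of characteristic different from $2$, $d\in k$, and $E\subset\mathbb{P}^3$ the elliptic curve $X_0^2+dX_3^2=X_1^2+X_2^2$, $X_0X_3=X_1X_2$, with identity $(1:0:1:0)$. Let $\mathscr{K}_2=E^2/\{\pm1\}$ be modelled in $\mathbb{P}^3\times\mathbb{P}^1$, with coordinates $\big((U_0:U_1:U_2:U_3),(Z_0:Z_1)\big)$, as the variety cut out by $U_0U_3=U_1U_2$ and $(U_0^2-U_1^2-U_2^2+U_3^2)Z_0^2=(U_0^2-dU_1^2-dU_2^2+d^2U_3^2)Z_1^2$, via the projection $(P,Q)\mapsto\big((X_0Y_0:X_2Y_0:X_0Y_2:X_2Y_2),(X_0Y_0:X_1Y_1)\big)$ for $(P,Q)=\big((X_0:X_1:X_2:X_3),(Y_0:Y_1:Y_2:Y_3)\big)$. Let $\tau:\mathscr{K}_2\to\mathscr{K}_2$ be the endomorphism induced by $\tau(P,Q)=(P+Q,Q)$ on $E^2$. Then $$\pi_1\circ\tau=(U_0Z_0-dU_3Z_1\;:\;-U_0Z_1+U_3Z_0),\qquad \pi_2\circ\tau=(U_0:U_2)=(U_1:U_3),$$ and $\pi_3\circ\tau$ is given by either of the equivalent expressions $$\big((U_0^2-dU_3^2)Z_0\;:\;(U_0U_1-U_2U_3)Z_0+(U_0U_2-dU_1U_3)Z_1\big),$$ $$\big(-(U_0U_2-U_1U_3)Z_0+(U_0U_1-dU_2U_3)Z_1\;:\;(U_1^2-U_2^2)Z_1\big).$$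
   Context: $\mathscr{K}_1=E/\{\pm1\}\cong\mathbb{P}^1$ via $(X_0:X_1:X_2:X_3)\mapsto(X_0:X_2)$; $-1$ acts diagonally on $E^2$. The projections $\pi_1,\pi_2:\mathscr{K}_2\to\mathscr{K}_1$ and $\pi_3:\mathscr{K}_2\to\mathbb{P}^1$ are $\pi_1=(U_0:U_1)=(U_2:U_3)$, $\pi_2=(U_0:U_2)=(U_1:U_3)$, $\pi_3=(Z_0:Z_1)$. "Given by" a polynomial expression means the morphism equals the displayed tuple wherever its components do not all vanish on $\mathscr{K}_2$. *)

theory Defs
  imports Main
begin

text \<open>Projective points are represented by (nonzero) coordinate tuples over a field;
  two tuples represent the same point iff they are nonzero scalar multiples of each other.\<close>

type_synonym 'a pt3 = "'a \<times> 'a \<times> 'a \<times> 'a"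
type_synonym 'a pt1 = "'a \<times> 'a"

definition same_pt1 :: "'a::field pt1 \<Rightarrow> 'a pt1 \<Rightarrow> bool" where
  "same_pt1 u v \<longleftrightarrow> v \<noteq> (0,0) \<and>
     (\<exists>c. c \<noteq> 0 \<and> fst u = c * fst v \<and> snd u = c * snd v)"

definition same_pt3 :: "'a::field pt3 \<Rightarrow> 'a pt3 \<Rightarrow> bool" where
  "same_pt3 u v \<longleftrightarrow> v \<noteq> (0,0,0,0) \<and>
     (case u of (u0,u1,u2,u3) \<Rightarrow> case v of (v0,v1,v2,v3) \<Rightarrow>
       (\<exists>c. c \<noteq> 0 \<and> u0 = c * v0 \<and> u1 = c * v1 \<and> u2 = c * v2 \<and> u3 = c * v3))"

definition on_E :: "'a::field \<Rightarrow> 'a pt3 \<Rightarrow> bool" where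
  "on_E d X \<longleftrightarrow> X \<noteq> (0,0,0,0) \<and>
     (case X of (X0,X1,X2,X3) \<Rightarrow> X0^2 + d*X3^2 = X1^2 + X2^2 \<and> X0*X3 = X1*X2)"

definition E_identity :: "'a::field pt3" where
  "E_identity = (1,0,1,0)"

text \<open>A complete system of bidegree (2,2) addition laws for the group law of E with
  identity (1:0:1:0) (the Edwards group law x^2+y^2 = 1 + d x^2 y^2,
  x = X1/X0, y = X2/X0; standard and dual addition formulas, combined).\<close>

definition E_add_laws :: "'a::field \<Rightarrow> 'a pt3 \<Rightarrow> 'a pt3 \<Rightarrow> 'a pt3 list" where
  "E_add_laws d X Y = (case X of (X0,X1,X2,X3) \<Rightarrow> case Y of (Y0,Y1,Y2,Y3) \<Rightarrow>
     let A  = X0*Y0 + d*X3*Y3;  B  = X0*Y0 - d*X3*Y3;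
         C  = X1*Y2 + X2*Y1;    D  = X2*Y2 - X1*Y1;
         A' = X1*Y1 + X2*Y2;    C' = X3*Y0 + X0*Y3;
         D' = X3*Y0 - X0*Y3;    B' = X1*Y2 - X2*Y1
     in [(A*B, C*B, D*A, C*D), (A'*B, C'*B, D*A', C'*D),
         (A*B', C*B', D'*A, C*D'), (A'*B', C'*B', D'*A', C'*D')])"

definition E_sum :: "'a::field \<Rightarrow> 'a pt3 \<Rightarrow> 'a pt3 \<Rightarrow> 'a pt3 \<Rightarrow> bool" where
  "E_sum d P Q R \<longleftrightarrow> on_E d R \<and>
     (\<forall>s\<in>set (E_add_laws d P Q). s \<noteq> (0,0,0,0) \<longrightarrow> same_pt3 s R)"

text \<open>K_1 = E/{+-1} = P^1 via (X0:X2) = (X1:X3): v represents the image of X.\<close>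

definition K1_image :: "'a::field pt3 \<Rightarrow> 'a pt1 \<Rightarrow> bool" where
  "K1_image X v \<longleftrightarrow> v \<noteq> (0,0) \<and>
     (case X of (X0,X1,X2,X3) \<Rightarrow>
        ((X0,X2) \<noteq> (0,0) \<longrightarrow> same_pt1 (X0,X2) v) \<and>
        ((X1,X3) \<noteq> (0,0) \<longrightarrow> same_pt1 (X1,X3) v))"

text \<open>Second component of the projection E^2 \<rightarrow> K_2: (X0Y0 : X1Y1), together with the
  equivalent representatives (X2Y2:X3Y3), (X0Y2:X1Y3), (X2Y0:X3Y1) on E^2.\<close>

definition K2_Z_image :: "'a::field pt3 \<Rightarrow> 'a pt3 \<Rightarrow> 'a pt1 \<Rightarrow> bool" where
  "K2_Z_image X Y w \<longleftrightarrow> w \<noteq> (0,0) \<and>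
     (case X of (X0,X1,X2,X3) \<Rightarrow> case Y of (Y0,Y1,Y2,Y3) \<Rightarrow>
        (\<forall>u\<in>{(X0*Y0, X1*Y1), (X2*Y2, X3*Y3), (X0*Y2, X1*Y3), (X2*Y0, X3*Y1)}.
            u \<noteq> (0,0) \<longrightarrow> same_pt1 u w))"

definition on_K2 :: "'a::field \<Rightarrow> 'a pt3 \<Rightarrow> 'a pt1 \<Rightarrow> bool" where
  "on_K2 d U Z \<longleftrightarrow> U \<noteq> (0,0,0,0) \<and> Z \<noteq> (0,0) \<and>
     (case U of (U0,U1,U2,U3) \<Rightarrow> case Z of (Z0,Z1) \<Rightarrow>
        U0*U3 = U1*U2 \<and>
        (U0^2 - U1^2 - U2^2 + U3^2) * Z0^2 = (U0^2 - d*U1^2 - d*U2^2 + d^2*U3^2) * Z1^2)"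

definition K2_image :: "'a::field \<Rightarrow> 'a pt3 \<Rightarrow> 'a pt3 \<Rightarrow> 'a pt3 \<Rightarrow> 'a pt1 \<Rightarrow> bool" where
  "K2_image d P Q U Z \<longleftrightarrow> on_K2 d U Z \<and>
     (\<exists>a b. K1_image P a \<and> K1_image Q b \<and>
        same_pt3 U (fst a * fst b, snd a * fst b, fst a * snd b, snd a * snd b)) \<and>
     K2_Z_image P Q Z"

end

theory Submission
  imports Defs
begin

text \<open>On E the relation X0 X3 = X1 X2 says that every point is a Segre product
  a \<otimes> m of its image a = (X0:X2) in K_1 with m = (X0:X1), and E becomes the double cover
  m0^2 (a0^2 - a1^2) = m1^2 (a0^2 - d a1^2) of K_1. Each addition law factors as e \<otimes> f, where e
  is a K_1-coordinate and f a fibre coordinate of P + Q; for d \<noteq> 0, 1 some e and some f are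
  nonzero. A point of K_2 is then U = b \<otimes> a, Z = (m0 n0 : m1 n1) for P = a \<otimes> m, Q = b \<otimes> n,
  and each claimed formula is proportional to e (resp. compatible with f and n) by a polynomial
  identity modulo the two curve equations.\<close>

definition segre :: "'a::field pt1 \<Rightarrow> 'a pt1 \<Rightarrow> 'a pt3" where
  "segre e f = (fst e * fst f, fst e * snd f, snd e * fst f, snd e * snd f)"

lemma segre_eq_0_iff: "segre e f = (0,0,0,0) \<longleftrightarrow> e = (0,0) \<or> f = (0,0)"
  by (cases e; cases f) (auto simp: segre_def)

lemma segre_rescale:
  assumes "c \<noteq> 0"
  shows "segre (c * fst e, c * snd e) (fst f / c, snd f / c) = segre e f"
  using assms by (simp add: segre_def)

lemma same_pt1_cross: "same_pt1 u v \<Longrightarrow> fst u * snd v = snd u * fst v"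
  by (auto simp: same_pt1_def)

lemma same_pt1I:
  fixes u v :: "'a::field pt1"
  assumes "u \<noteq> (0,0)" "v \<noteq> (0,0)" "fst u * snd v = snd u * fst v"
  shows "same_pt1 u v"
proof -
  obtain u0 u1 v0 v1 where uv: "u = (u0,u1)" "v = (v0,v1)" by (cases u, cases v)
  show ?thesis
  proof (cases "v0 = 0")
    case True
    with assms uv have "v1 \<noteq> 0" "u0 = 0" by auto
    then show ?thesis using assms True uv
      by (auto simp: same_pt1_def intro!: exI[of _ "u1/v1"])
  next
    case False
    with assms uv have "u0 \<noteq> 0" by auto
    then show ?thesis using assms False uv
      by (auto simp: same_pt1_def field_simps intro!: exI[of _ "u0/v0"])
  qed
qed

lemma K1_image_segre:
  assumes "w \<noteq> (0,0)" "fst e * snd w = snd e * fst w"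
  shows "K1_image (segre e f) w"
  using assms by (auto simp: K1_image_def segre_def intro!: same_pt1I)

lemma K2_Z_image_segre:
  assumes "w \<noteq> (0,0)" "fst f * fst n * snd w = snd f * snd n * fst w"
  shows "K2_Z_image (segre e f) (segre b n) w"
  using assms by (auto simp: K2_Z_image_def segre_def mult.assoc intro!: same_pt1I)

lemma same_pt3_segre_left:
  assumes "same_pt3 X (segre e f)"
  shows "\<exists>c. c \<noteq> 0 \<and> X = segre (c * fst e, c * snd e) f"
  using assms by (cases X) (auto simp: same_pt3_def segre_def mult.assoc)

lemma same_pt3_segre_right:
  assumes "same_pt3 (segre e f) X"
  shows "\<exists>c. c \<noteq> 0 \<and> X = segre (c * fst e, c * snd e) f"
proof -
  obtain c where "c \<noteq> 0" "segre e f = (c * fst X, c * fst (snd X), c * fst (snd (snd X)), c * snd (snd (snd X)))"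
    using assms by (cases X) (auto simp: same_pt3_def)
  then have "X = segre (fst e / c, snd e / c) f"
    by (cases X) (auto simp: segre_def field_simps)
  with \<open>c \<noteq> 0\<close> show ?thesis
    by (intro exI[of _ "1 / c"]) simp
qed

lemma K1_image_segre_factor:
  assumes "K1_image X a"
  obtains m where "X = segre a m"
proof -
  obtain x0 x1 x2 x3 a0 a1 where coords: "X = (x0,x1,x2,x3)" "a = (a0,a1)"
    by (cases X, cases a)
  have "(a0,a1) \<noteq> (0,0)" and cross: "x0 * a1 = x2 * a0" "x1 * a1 = x3 * a0"
    using assms by (auto simp: K1_image_def coords dest: same_pt1_cross)
  show ?thesis
  proof (cases "a0 = 0")
    case False
    with cross show ?thesis
      by (intro that[of "(x0 / a0, x1 / a0)"]) (simp add: coords segre_def field_simps)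
  next
    case True
    with \<open>(a0,a1) \<noteq> (0,0)\<close> cross show ?thesis
      by (intro that[of "(x2 / a1, x3 / a1)"]) (simp add: coords segre_def field_simps)
  qed
qed

lemma K2_Z_image_segre_cross:
  fixes a m b n Z :: "'a::field pt1"
  assumes Z: "K2_Z_image (segre a m) (segre b n) Z" and "a \<noteq> (0,0)" "b \<noteq> (0,0)"
  shows "fst m * fst n * snd Z = snd m * snd n * fst Z"
proof -
  obtain a0 a1 b0 b1 where ab: "a = (a0,a1)" "b = (b0,b1)" by (cases a, cases b)
  let ?mn = "(fst m * fst n, snd m * snd n)"
  have reps: "\<forall>x\<in>{a0 * b0, a1 * b1, a0 * b1, a1 * b0}.
      (x * fst ?mn, x * snd ?mn) \<noteq> (0,0) \<longrightarrow> same_pt1 (x * fst ?mn, x * snd ?mn) Z"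
    using Z by (simp add: K2_Z_image_def segre_def ab ac_simps)
  have "\<exists>x\<in>{a0 * b0, a1 * b1, a0 * b1, a1 * b0}. x \<noteq> 0"
    using assms(2,3) ab by (cases "a0 = 0"; cases "b0 = 0") auto
  then obtain x where "x \<noteq> 0" "x \<in> {a0 * b0, a1 * b1, a0 * b1, a1 * b0}"
    by blast
  with reps have "(x * fst ?mn, x * snd ?mn) = (0,0) \<or> same_pt1 (x * fst ?mn, x * snd ?mn) Z"
    by blast
  then have "x * fst ?mn * snd Z = x * snd ?mn * fst Z"
    by (auto dest: same_pt1_cross)
  with \<open>x \<noteq> 0\<close> show ?thesis
    by (simp add: mult.assoc)
qed

definition E_sum_K1_reps :: "'a::field \<Rightarrow> 'a pt3 \<Rightarrow> 'a pt3 \<Rightarrow> 'a pt1 list" where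
  "E_sum_K1_reps d X Y = (case X of (X0,X1,X2,X3) \<Rightarrow> case Y of (Y0,Y1,Y2,Y3) \<Rightarrow>
     [(X0*Y0 - d*X3*Y3, X2*Y2 - X1*Y1), (X1*Y2 - X2*Y1, X3*Y0 - X0*Y3)])"

definition E_sum_fibre_reps :: "'a::field \<Rightarrow> 'a pt3 \<Rightarrow> 'a pt3 \<Rightarrow> 'a pt1 list" where
  "E_sum_fibre_reps d X Y = (case X of (X0,X1,X2,X3) \<Rightarrow> case Y of (Y0,Y1,Y2,Y3) \<Rightarrow>
     [(X0*Y0 + d*X3*Y3, X1*Y2 + X2*Y1), (X1*Y1 + X2*Y2, X3*Y0 + X0*Y3)])"

lemma E_add_laws_segre:
  "E_add_laws d X Y = [segre e f. e \<leftarrow> E_sum_K1_reps d X Y, f \<leftarrow> E_sum_fibre_reps d X Y]"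
  by (simp add: E_add_laws_def E_sum_K1_reps_def E_sum_fibre_reps_def segre_def Let_def
      algebra_simps split: prod.split)

lemma on_E_segre_iff:
  "on_E d (segre (a0,a1) (m0,m1)) \<longleftrightarrow>
     (a0,a1) \<noteq> (0,0) \<and> (m0,m1) \<noteq> (0,0) \<and> m0^2*(a0^2 - a1^2) = m1^2*(a0^2 - d*a1^2)"
proof -
  have "(a0*m0)^2 + d*(a1*m1)^2 = (a0*m1)^2 + (a1*m0)^2 \<longleftrightarrow>
        m0^2*(a0^2 - a1^2) = m1^2*(a0^2 - d*a1^2)"
    by algebra
  then show ?thesis
    using segre_eq_0_iff[of "(a0,a1)" "(m0,m1)"] by (auto simp: on_E_def segre_def)
qed

lemma on_E_coordinates:
  assumes "on_E d (X0,X1,X2,X3)"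
  shows "X0 \<noteq> 0 \<or> X1 \<noteq> 0 \<or> X2 \<noteq> 0 \<or> X3 \<noteq> 0"
    and "X0^2 + d*X3^2 = X1^2 + X2^2" and "X0*X3 = X1*X2"
  using assms by (auto simp: on_E_def)

lemma E_sum_K1_reps_nonzero:
  fixes d :: "'a::field"
  assumes "(2::'a) \<noteq> 0" "d \<noteq> 0" "d \<noteq> 1" and P: "on_E d P" and Q: "on_E d Q"
  shows "\<exists>e\<in>set (E_sum_K1_reps d P Q). e \<noteq> (0,0)"
proof (rule ccontr)
  obtain X0 X1 X2 X3 Y0 Y1 Y2 Y3 where PQ: "P = (X0,X1,X2,X3)" "Q = (Y0,Y1,Y2,Y3)"
    by (cases P, cases Q)
  note X = on_E_coordinates[OF P[unfolded PQ]] and Y = on_E_coordinates[OF Q[unfolded PQ]]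
  assume "\<not> ?thesis"
  then have "X0*Y0 - d*X3*Y3 = 0" "X2*Y2 - X1*Y1 = 0" "X1*Y2 - X2*Y1 = 0" "X3*Y0 - X0*Y3 = 0"
    by (auto simp: E_sum_K1_reps_def PQ)
  with X Y assms(1-3) show False
    by (elim disjE) algebra+
qed

lemma E_sum_fibre_reps_nonzero:
  fixes d :: "'a::field"
  assumes "(2::'a) \<noteq> 0" "d \<noteq> 0" "d \<noteq> 1" and P: "on_E d P" and Q: "on_E d Q"
  shows "\<exists>f\<in>set (E_sum_fibre_reps d P Q). f \<noteq> (0,0)"
proof (rule ccontr)
  obtain X0 X1 X2 X3 Y0 Y1 Y2 Y3 where PQ: "P = (X0,X1,X2,X3)" "Q = (Y0,Y1,Y2,Y3)"
    by (cases P, cases Q)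
  note X = on_E_coordinates[OF P[unfolded PQ]] and Y = on_E_coordinates[OF Q[unfolded PQ]]
  assume "\<not> ?thesis"
  then have "X0*Y0 + d*X3*Y3 = 0" "X1*Y2 + X2*Y1 = 0" "X1*Y1 + X2*Y2 = 0" "X3*Y0 + X0*Y3 = 0"
    by (auto simp: E_sum_fibre_reps_def PQ)
  with X Y assms(1-3) show False
    by (elim disjE) algebra+
qed

lemma E_sum_segre:
  fixes d :: "'a::field"
  assumes "(2::'a) \<noteq> 0" "d \<noteq> 0" "d \<noteq> 1" and P: "on_E d P" and Q: "on_E d Q"
    and R: "E_sum d P Q R"
  obtains e f c where "e \<in> set (E_sum_K1_reps d P Q)" "f \<in> set (E_sum_fibre_reps d P Q)"
    and "c \<noteq> 0" "R = segre (c * fst e, c * snd e) f"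
proof -
  obtain e where e: "e \<in> set (E_sum_K1_reps d P Q)" "e \<noteq> (0,0)"
    using E_sum_K1_reps_nonzero[OF assms(1-5)] by blast
  obtain f where f: "f \<in> set (E_sum_fibre_reps d P Q)" "f \<noteq> (0,0)"
    using E_sum_fibre_reps_nonzero[OF assms(1-5)] by blast
  have "same_pt3 (segre e f) R"
    using R e f by (auto simp: E_sum_def E_add_laws_segre segre_eq_0_iff)
  with e f that show ?thesis
    using same_pt3_segre_right by blast
qed

definition pi1_tau :: "'a::field \<Rightarrow> 'a pt3 \<Rightarrow> 'a pt1 \<Rightarrow> 'a pt1" where
  "pi1_tau d U Z = (case U of (U0,U1,U2,U3) \<Rightarrow> case Z of (Z0,Z1) \<Rightarrow>
     (U0*Z0 - d*U3*Z1, - U0*Z1 + U3*Z0))"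

definition pi3_tau :: "'a::field \<Rightarrow> 'a pt3 \<Rightarrow> 'a pt1 \<Rightarrow> 'a pt1" where
  "pi3_tau d U Z = (case U of (U0,U1,U2,U3) \<Rightarrow> case Z of (Z0,Z1) \<Rightarrow>
     ((U0^2 - d*U3^2)*Z0, (U0*U1 - U2*U3)*Z0 + (U0*U2 - d*U1*U3)*Z1))"

definition pi3_tau' :: "'a::field \<Rightarrow> 'a pt3 \<Rightarrow> 'a pt1 \<Rightarrow> 'a pt1" where
  "pi3_tau' d U Z = (case U of (U0,U1,U2,U3) \<Rightarrow> case Z of (Z0,Z1) \<Rightarrow>
     (- (U0*U2 - U1*U3)*Z0 + (U0*U1 - d*U2*U3)*Z1, (U1^2 - U2^2)*Z1))"

lemma K2_Z_segre_cases:
  fixes m0 m1 n0 n1 Z0 Z1 :: "'a::field"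
  assumes "m0*n0*Z1 = m1*n1*Z0" "(m0,m1) \<noteq> (0,0)" "(n0,n1) \<noteq> (0,0)"
  obtains l where "Z0 = l*(m0*n0)" "Z1 = l*(m1*n1)"
    | "m0 = 0" "n1 = 0" "m1 \<noteq> 0" "n0 \<noteq> 0"
    | "m1 = 0" "n0 = 0" "m0 \<noteq> 0" "n1 \<noteq> 0"
proof (cases "m0*n0 = 0 \<and> m1*n1 = 0")
  case True
  with assms(2,3) that(2,3) show ?thesis by auto
next
  case False
  then have "Z0 = Z0/(m0*n0)*(m0*n0) \<and> Z1 = Z0/(m0*n0)*(m1*n1) \<or>
             Z0 = Z1/(m1*n1)*(m0*n0) \<and> Z1 = Z1/(m1*n1)*(m1*n1)"
    using assms(1) by (cases "m0*n0 = 0") (auto simp: field_simps)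
  with that(1) show ?thesis by blast
qed

lemma pi1_tau_segre_cross:
  fixes a0 a1 b0 b1 m0 m1 n0 n1 Z0 Z1 d :: "'a::field"
  assumes P: "on_E d (segre (a0,a1) (m0,m1))" and Q: "on_E d (segre (b0,b1) (n0,n1))"
    and Z: "m0*n0*Z1 = m1*n1*Z0" "(m0,m1) \<noteq> (0,0)" "(n0,n1) \<noteq> (0,0)"
  shows "\<forall>e\<in>set (E_sum_K1_reps d (segre (a0,a1) (m0,m1)) (segre (b0,b1) (n0,n1))).
    fst e * snd (pi1_tau d (segre (b0,b1) (a0,a1)) (Z0,Z1)) =
    snd e * fst (pi1_tau d (segre (b0,b1) (a0,a1)) (Z0,Z1))"
proof -
  have curves: "m0^2*(a0^2 - a1^2) = m1^2*(a0^2 - d*a1^2)" "n0^2*(b0^2 - b1^2) = n1^2*(b0^2 - d*b1^2)"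
    using P Q by (simp_all add: on_E_segre_iff)
  show ?thesis
  proof (rule K2_Z_segre_cases[OF Z])
    fix l
    assume "Z0 = l*(m0*n0)" "Z1 = l*(m1*n1)"
    with curves show ?thesis
      by (simp add: E_sum_K1_reps_def pi1_tau_def segre_def) (intro conjI, algebra+)
  qed (use curves in \<open>simp add: E_sum_K1_reps_def pi1_tau_def segre_def; algebra\<close>)+
qed

lemma pi3_tau_segre_cross:
  fixes a0 a1 b0 b1 m0 m1 n0 n1 Z0 Z1 d :: "'a::field"
  assumes P: "on_E d (segre (a0,a1) (m0,m1))" and Q: "on_E d (segre (b0,b1) (n0,n1))"
    and Z: "m0*n0*Z1 = m1*n1*Z0" "(m0,m1) \<noteq> (0,0)" "(n0,n1) \<noteq> (0,0)"
  shows "\<forall>f\<in>set (E_sum_fibre_reps d (segre (a0,a1) (m0,m1)) (segre (b0,b1) (n0,n1))).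
    \<forall>w\<in>{pi3_tau d (segre (b0,b1) (a0,a1)) (Z0,Z1), pi3_tau' d (segre (b0,b1) (a0,a1)) (Z0,Z1)}.
      fst f * n0 * snd w = snd f * n1 * fst w"
proof -
  have curves: "m0^2*(a0^2 - a1^2) = m1^2*(a0^2 - d*a1^2)" "n0^2*(b0^2 - b1^2) = n1^2*(b0^2 - d*b1^2)"
    using P Q by (simp_all add: on_E_segre_iff)
  show ?thesis
  proof (rule K2_Z_segre_cases[OF Z])
    fix l
    assume "Z0 = l*(m0*n0)" "Z1 = l*(m1*n1)"
    with curves show ?thesis
      by (simp add: E_sum_fibre_reps_def pi3_tau_def pi3_tau'_def segre_def) (intro conjI, algebra+)
  qed (use curves in \<open>simp add: E_sum_fibre_reps_def pi3_tau_def pi3_tau'_def segre_def; (intro conjI)?; algebra\<close>)+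
qed

lemma tau_segre_images:
  fixes d :: "'a::field" and a m b n Z :: "'a pt1" and R :: "'a pt3"
  assumes char: "(2::'a) \<noteq> 0" and elliptic: "d \<noteq> 0" "d \<noteq> 1"
    and P: "on_E d (segre a m)" and Q: "on_E d (segre b n)"
    and ab: "a \<noteq> (0,0)" "b \<noteq> (0,0)"
    and Z: "K2_Z_image (segre a m) (segre b n) Z"
    and R: "E_sum d (segre a m) (segre b n) R"
  shows "(pi1_tau d (segre b a) Z \<noteq> (0,0) \<longrightarrow> K1_image R (pi1_tau d (segre b a) Z))
    \<and> (pi3_tau d (segre b a) Z \<noteq> (0,0) \<longrightarrow> K2_Z_image R (segre b n) (pi3_tau d (segre b a) Z))
    \<and> (pi3_tau' d (segre b a) Z \<noteq> (0,0) \<longrightarrow> K2_Z_image R (segre b n) (pi3_tau' d (segre b a) Z))"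
proof -
  obtain a0 a1 b0 b1 m0 m1 n0 n1 Z0 Z1
    where coords: "a = (a0,a1)" "b = (b0,b1)" "m = (m0,m1)" "n = (n0,n1)" "Z = (Z0,Z1)"
    by (cases a, cases b, cases m, cases n, cases Z)
  have mn: "(m0,m1) \<noteq> (0,0)" "(n0,n1) \<noteq> (0,0)"
    using P Q by (simp_all add: on_E_segre_iff coords)
  have hZ: "m0*n0*Z1 = m1*n1*Z0"
    using K2_Z_image_segre_cross[OF Z ab] by (simp add: coords)
  obtain e f c where e: "e \<in> set (E_sum_K1_reps d (segre a m) (segre b n))"
    and f: "f \<in> set (E_sum_fibre_reps d (segre a m) (segre b n))"
    and R_eq: "c \<noteq> 0" "R = segre (c * fst e, c * snd e) f"
    using E_sum_segre[OF char elliptic P Q R] by blast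
  have e_cross: "fst e * snd (pi1_tau d (segre b a) Z) = snd e * fst (pi1_tau d (segre b a) Z)"
    using pi1_tau_segre_cross[OF P[unfolded coords] Q[unfolded coords] hZ mn] e by (simp add: coords)
  have f_cross: "fst f * fst n * snd w = snd f * snd n * fst w"
    if "w \<in> {pi3_tau d (segre b a) Z, pi3_tau' d (segre b a) Z}" for w
    using pi3_tau_segre_cross[OF P[unfolded coords] Q[unfolded coords] hZ mn] f that
    by (force simp: coords)
  show ?thesis
    unfolding R_eq(2)
    by (intro conjI impI K1_image_segre K2_Z_image_segre f_cross)
       (auto simp: e_cross mult.assoc)
qed

theorem theorem6p2:
  fixes d :: "'a::field" and P Q R :: "'a pt3" and U0 U1 U2 U3 Z0 Z1 :: 'a
  assumes char: "(2::'a) \<noteq> 0"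
    and elliptic: "d \<noteq> 0" "d \<noteq> 1"
    and P: "on_E d P" and Q: "on_E d Q"
    and R: "E_sum d P Q R"
    and UZ: "K2_image d P Q (U0,U1,U2,U3) (Z0,Z1)"
  shows
    "((U0*Z0 - d*U3*Z1, - U0*Z1 + U3*Z0) \<noteq> (0,0) \<longrightarrow>
        K1_image R (U0*Z0 - d*U3*Z1, - U0*Z1 + U3*Z0))
     \<and> ((U0,U2) \<noteq> (0,0) \<longrightarrow> K1_image Q (U0,U2))
     \<and> ((U1,U3) \<noteq> (0,0) \<longrightarrow> K1_image Q (U1,U3))
     \<and> (((U0^2 - d*U3^2)*Z0, (U0*U1 - U2*U3)*Z0 + (U0*U2 - d*U1*U3)*Z1) \<noteq> (0,0) \<longrightarrow>
        K2_Z_image R Q ((U0^2 - d*U3^2)*Z0, (U0*U1 - U2*U3)*Z0 + (U0*U2 - d*U1*U3)*Z1))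
     \<and> ((- (U0*U2 - U1*U3)*Z0 + (U0*U1 - d*U2*U3)*Z1, (U1^2 - U2^2)*Z1) \<noteq> (0,0) \<longrightarrow>
        K2_Z_image R Q (- (U0*U2 - U1*U3)*Z0 + (U0*U1 - d*U2*U3)*Z1, (U1^2 - U2^2)*Z1))"
proof -
  obtain a b where a: "K1_image P a" and b: "K1_image Q b"
    and U: "same_pt3 (U0,U1,U2,U3) (segre b a)" and Z: "K2_Z_image P Q (Z0,Z1)"
    using UZ by (auto simp: K2_image_def segre_def mult.commute)
  obtain m where P_eq: "P = segre a m"
    using K1_image_segre_factor[OF a] .
  obtain c where "c \<noteq> 0" and U_eq: "(U0,U1,U2,U3) = segre (c * fst b, c * snd b) a"
    using same_pt3_segre_left[OF U] by blast
  define b' where "b' = (c * fst b, c * snd b)"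
  obtain n where "Q = segre b n"
    using K1_image_segre_factor[OF b] .
  then have Q_eq: "Q = segre b' (fst n / c, snd n / c)"
    using segre_rescale[OF \<open>c \<noteq> 0\<close>] by (simp add: b'_def)
  have U_coords: "U0 = fst b' * fst a" "U1 = fst b' * snd a" "U2 = snd b' * fst a" "U3 = snd b' * snd a"
    using U_eq by (simp_all add: segre_def b'_def)
  have "a \<noteq> (0,0)" "b' \<noteq> (0,0)"
    using a b \<open>c \<noteq> 0\<close> by (auto simp: K1_image_def b'_def prod_eq_iff)
  note tau = tau_segre_images[OF char elliptic P[unfolded P_eq] Q[unfolded Q_eq] this
      Z[unfolded P_eq Q_eq] R[unfolded P_eq Q_eq]]
  have "(U0,U2) \<noteq> (0,0) \<longrightarrow> K1_image Q (U0,U2)" "(U1,U3) \<noteq> (0,0) \<longrightarrow> K1_image Q (U1,U3)"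
    unfolding Q_eq by (auto simp: U_coords intro!: K1_image_segre)
  with tau show ?thesis
    unfolding Q_eq[symmetric]
    by (simp add: pi1_tau_def pi3_tau_def pi3_tau'_def segre_def U_coords)
qed

end
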